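(* Let $d\in\mathbb N$, $\alpha\in\mathbb R_+^d$, and let $D\subset\mathbb R_+^d$ be a nonempty convex compact set. Then $$\inf_{x\in[0,1]^d}\max_{y\in D}\frac{y^\top x}{\alpha^\top x}=\max_{y\in D}\min_{i\in[d]}\frac{y_i}{\alpha_i}.$$ Moreover, the same equality holds with $\inf_{x\in[0,1]^d}$ replaced by $\inf_{x\in\mathbb R_+^d}$.
   Context: Every ratio whose denominator equals zero is defined to be $+\infty$; this applies both to $\frac{y^\top x}{\alpha^\top x}$ when $\alpha^\top x=0$ and to $\frac{y_i}{\alpha_i}$ when $\alpha_i=0$. *)

theory Defs
  imports "HOL-Analysis.Analysis" "HOL-Library.Extended_Real"
begin

definition eratio :: "real \<Rightarrow> real \<Rightarrow> ereal" where
  "eratio a b = (if b = 0 then \<infinity> else ereal (a / b))"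

end

(*
  The bound \<ge> is weak duality: if y_i \<ge> r \<alpha>_i for every i, then y\<^sup>T x \<ge> r \<alpha>\<^sup>T x for every
  x \<ge> 0. For \<le>, let c be the right-hand side (finite, else there is nothing to show). The
  set C of vectors z with z_i > c \<alpha>_i whenever \<alpha>_i > 0 is convex and misses D, so a
  hyperplane w separates them. Since C is unbounded upwards in every coordinate, and in both
  directions in the coordinates where \<alpha> vanishes, w \<ge> 0 and w is supported on the support of \<alpha>;
  letting z approach c \<alpha> gives w\<^sup>T y \<le> c w\<^sup>T \<alpha> on D. A positive multiple of w lies in
  the unit box and attains the value c.
*)

theory Submission
  imports Defs
begin

definition min_ratio :: "real ^ 'n \<Rightarrow> real ^ 'n \<Rightarrow> ereal" where
  "min_ratio alpha y = Min ((\<lambda>i. eratio (y $ i) (alpha $ i)) ` UNIV)"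

lemma inner_vec_real_eq_sum: "(x :: real ^ 'n) \<bullet> y = (\<Sum>i\<in>UNIV. x $ i * y $ i)"
  by (simp add: inner_vec_def)

lemma min_ratio_neq_MInfty: "min_ratio alpha y \<noteq> -\<infinity>"
proof -
  have "min_ratio alpha y \<in> (\<lambda>i. eratio (y $ i) (alpha $ i)) ` UNIV"
    unfolding min_ratio_def by (intro Min_in) auto
  then show ?thesis by (auto simp: eratio_def)
qed

lemma min_ratio_le_eratio: "min_ratio alpha y \<le> eratio (y $ i) (alpha $ i)"
  unfolding min_ratio_def by (intro Min_le) auto

lemma ereal_le_eratio_iff: "0 \<le> b \<Longrightarrow> ereal c \<le> eratio a b \<longleftrightarrow> (0 < b \<longrightarrow> c * b \<le> a)"
  by (auto simp: eratio_def le_divide_eq)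

lemma ereal_less_eratio_iff: "0 \<le> b \<Longrightarrow> ereal c < eratio a b \<longleftrightarrow> (0 < b \<longrightarrow> c * b < a)"
  by (auto simp: eratio_def less_divide_eq)

lemma ereal_le_min_ratio_iff:
  assumes "\<forall>i. 0 \<le> alpha $ i"
  shows "ereal c \<le> min_ratio alpha y \<longleftrightarrow> (\<forall>i. 0 < alpha $ i \<longrightarrow> c * alpha $ i \<le> y $ i)"
  using assms by (simp add: min_ratio_def ereal_le_eratio_iff)

lemma ereal_less_min_ratio_iff:
  assumes "\<forall>i. 0 \<le> alpha $ i"
  shows "ereal c < min_ratio alpha y \<longleftrightarrow> (\<forall>i. 0 < alpha $ i \<longrightarrow> c * alpha $ i < y $ i)"
  using assms by (simp add: min_ratio_def ereal_less_eratio_iff)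

lemma min_ratio_le_eratio_inner:
  fixes alpha x y :: "real ^ 'n"
  assumes alpha: "\<forall>i. 0 \<le> alpha $ i" and x: "\<forall>i. 0 \<le> x $ i" and y: "\<forall>i. 0 \<le> y $ i"
  shows "min_ratio alpha y \<le> eratio (y \<bullet> x) (alpha \<bullet> x)"
proof (cases "alpha \<bullet> x = 0")
  case True
  then show ?thesis by (simp add: eratio_def)
next
  case False
  then obtain i where "alpha $ i * x $ i \<noteq> 0"
    unfolding inner_vec_real_eq_sum by (meson sum.neutral)
  with alpha have "0 < alpha $ i"
    by (metis less_eq_real_def mult_zero_left)
  then have "min_ratio alpha y \<noteq> \<infinity>"
    using min_ratio_le_eratio[of alpha y i] by (auto simp: eratio_def)
  with min_ratio_neq_MInfty obtain r where r: "min_ratio alpha y = ereal r"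
    by (cases "min_ratio alpha y") auto
  have "r * alpha $ j * x $ j \<le> y $ j * x $ j" for j
    using ereal_le_min_ratio_iff[OF alpha, of r y] r alpha x y
    by (cases "alpha $ j = 0") (auto intro: mult_right_mono simp: less_le)
  then have "r * (alpha \<bullet> x) \<le> y \<bullet> x"
    unfolding inner_vec_real_eq_sum sum_distrib_left by (simp add: sum_mono mult.assoc)
  moreover have "0 < alpha \<bullet> x"
    using False alpha x by (simp add: inner_vec_real_eq_sum sum_nonneg order.not_eq_order_implies_strict)
  ultimately show ?thesis
    using r False by (simp add: eratio_def field_simps)
qed

lemma convex_strict_componentwise_lower_bounds:
  "convex {z :: real ^ 'n. \<forall>i\<in>I. l i < z $ i}"
proof -
  have "{z :: real ^ 'n. \<forall>i\<in>I. l i < z $ i} = (\<Inter>i\<in>I. {z. axis i 1 \<bullet> z > l i})"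
    by (auto simp: inner_axis')
  then show ?thesis
    by (simp add: convex_INT convex_halfspace_gt)
qed

lemma inner_nonneg_if_bounded_below_on_ray:
  fixes w z v :: "'a :: real_inner"
  assumes "\<forall>t\<ge>0. b \<le> w \<bullet> (z + t *\<^sub>R v)"
  shows "0 \<le> w \<bullet> v"
proof (rule ccontr)
  assume neg: "\<not> 0 \<le> w \<bullet> v"
  define t where "t = (\<bar>w \<bullet> z - b\<bar> + 1) / - (w \<bullet> v)"
  have "0 \<le> t" using neg by (simp add: t_def divide_nonneg_neg)
  with assms have "b \<le> w \<bullet> z + t * (w \<bullet> v)"
    by (simp add: inner_add_right)
  also have "\<dots> = w \<bullet> z - \<bar>w \<bullet> z - b\<bar> - 1"
    using neg by (simp add: t_def field_simps)
  finally show False by linarith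
qed

lemma nonneg_certificate_of_min_ratio_le:
  fixes alpha :: "real ^ 'n" and D :: "(real ^ 'n) set"
  assumes alpha: "\<forall>i. 0 \<le> alpha $ i"
    and "D \<noteq> {}" and "convex D"
    and D_le: "\<forall>y\<in>D. min_ratio alpha y \<le> ereal c"
  shows "\<exists>w. (\<forall>i. 0 \<le> w $ i) \<and> 0 < w \<bullet> alpha \<and> (\<forall>y\<in>D. w \<bullet> y \<le> c * (w \<bullet> alpha))"
proof -
  \<comment> \<open>the strict superlevel set \<open>{z. ereal c < min_ratio alpha z}\<close>\<close>
  define C where "C = {z :: real ^ 'n. \<forall>i\<in>{i. 0 < alpha $ i}. c * alpha $ i < z $ i}"
  define z0 :: "real ^ 'n" where "z0 = (\<chi> j. c * alpha $ j + 1)"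
  have z0: "z0 \<in> C"
    by (simp add: C_def z0_def)
  have "D \<inter> C = {}"
    using D_le ereal_less_min_ratio_iff[OF alpha] by (fastforce simp: C_def not_le[symmetric])
  moreover have "convex C"
    unfolding C_def by (rule convex_strict_componentwise_lower_bounds)
  ultimately obtain w b where "w \<noteq> 0" and w_D: "\<forall>y\<in>D. w \<bullet> y \<le> b" and w_C: "\<forall>z\<in>C. b \<le> w \<bullet> z"
    using separating_hyperplane_sets[OF \<open>convex D\<close> _ \<open>D \<noteq> {}\<close>] z0 by blast
  have w_nonneg: "0 \<le> w $ i" for i
  proof -
    have "\<forall>t\<ge>0. b \<le> w \<bullet> (z0 + t *\<^sub>R axis i 1)"
      using w_C by (auto simp: C_def z0_def axis_def add_strict_increasing)
    then show ?thesis
      using inner_nonneg_if_bounded_below_on_ray by (fastforce simp: inner_axis)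
  qed
  have w_supp: "w $ i = 0" if "alpha $ i = 0" for i
  proof -
    have "\<forall>t\<ge>0. b \<le> w \<bullet> (z0 + t *\<^sub>R - axis i 1)"
      using w_C that by (auto simp: C_def z0_def axis_def)
    then have "0 \<le> - w $ i"
      using inner_nonneg_if_bounded_below_on_ray by (fastforce simp: inner_axis)
    with w_nonneg[of i] show ?thesis by simp
  qed
  have b_le: "b \<le> c * (w \<bullet> alpha)"
  proof (rule field_le_epsilon)
    fix e :: real
    assume "0 < e"
    define S where "S = (\<Sum>j\<in>UNIV. w $ j)"
    have "0 \<le> S"
      by (simp add: S_def sum_nonneg w_nonneg)
    define t where "t = e / (S + 1)"
    have "0 < t" "t * S \<le> e"
      using \<open>0 < e\<close> \<open>0 \<le> S\<close> by (simp_all add: t_def field_simps)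
    have "(\<chi> j. c * alpha $ j + t) \<in> C"
      using \<open>0 < t\<close> by (simp add: C_def)
    then have "b \<le> w \<bullet> (\<chi> j. c * alpha $ j + t)"
      using w_C by blast
    also have "\<dots> = c * (w \<bullet> alpha) + t * S"
      by (simp add: S_def inner_vec_real_eq_sum algebra_simps sum.distrib sum_distrib_left)
    finally show "b \<le> c * (w \<bullet> alpha) + e"
      using \<open>t * S \<le> e\<close> by simp
  qed
  obtain i where "w $ i \<noteq> 0"
    using \<open>w \<noteq> 0\<close> by (metis vec_eq_iff zero_index)
  then have "0 < w $ i * alpha $ i"
    using w_nonneg[of i] w_supp[of i] alpha by (fastforce simp: less_le)
  also have "\<dots> \<le> w \<bullet> alpha"
    unfolding inner_vec_real_eq_sum using w_nonneg alpha by (intro member_le_sum) auto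
  finally show ?thesis
    using w_nonneg w_D b_le by force
qed

lemma unit_box_point_with_eratio_le:
  fixes alpha :: "real ^ 'n" and D :: "(real ^ 'n) set" and c :: ereal
  assumes alpha: "\<forall>i. 0 \<le> alpha $ i"
    and "D \<noteq> {}" and "convex D"
    and D_le: "\<forall>y\<in>D. min_ratio alpha y \<le> c" and "c \<noteq> \<infinity>"
  shows "\<exists>x. (\<forall>i. 0 \<le> x $ i \<and> x $ i \<le> 1) \<and> (\<forall>y\<in>D. eratio (y \<bullet> x) (alpha \<bullet> x) \<le> c)"
proof -
  have "c \<noteq> -\<infinity>"
    using \<open>D \<noteq> {}\<close> D_le min_ratio_neq_MInfty by (force simp: ereal_infty_less_eq)
  with \<open>c \<noteq> \<infinity>\<close> obtain c0 where c: "c = ereal c0"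
    by (cases c) auto
  obtain w where w_nonneg: "\<forall>i. 0 \<le> w $ i" and "0 < w \<bullet> alpha"
    and w_D: "\<forall>y\<in>D. w \<bullet> y \<le> c0 * (w \<bullet> alpha)"
    using nonneg_certificate_of_min_ratio_le[OF alpha \<open>D \<noteq> {}\<close> \<open>convex D\<close>] D_le c by blast
  define s where "s = 1 + norm w"
  have "0 < s"
    by (simp add: s_def add_pos_nonneg)
  define x where "x = (1 / s) *\<^sub>R w"
  have "0 \<le> x $ i \<and> x $ i \<le> 1" for i
    using w_nonneg component_le_norm_cart[of w i] \<open>0 < s\<close> by (simp add: x_def s_def field_simps)
  moreover have "eratio (y \<bullet> x) (alpha \<bullet> x) \<le> c" if "y \<in> D" for y
  proof -
    have "(w \<bullet> y) / (w \<bullet> alpha) \<le> c0"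
      using w_D that \<open>0 < w \<bullet> alpha\<close> by (simp add: divide_le_eq)
    then show ?thesis
      using \<open>0 < w \<bullet> alpha\<close> \<open>0 < s\<close> by (simp add: c x_def eratio_def inner_commute)
  qed
  ultimately show ?thesis
    by blast
qed

lemma INF_eq_if_lower_bound_and_witness:
  fixes F :: "'a \<Rightarrow> 'b :: complete_lattice"
  assumes "B \<subseteq> P" and "\<And>x. x \<in> P \<Longrightarrow> c \<le> F x"
    and "c \<noteq> top \<Longrightarrow> \<exists>x\<in>B. F x \<le> c"
  shows "(INF x\<in>B. F x) = c \<and> (INF x\<in>P. F x) = c"
proof (cases "c = top")
  case True
  then show ?thesis
    using assms by (auto intro!: INF_eqI simp: top_le)
next
  case False
  then obtain x where "x \<in> B" "F x \<le> c"
    using assms(3) by blast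
  then show ?thesis
    using assms(1,2) by (auto intro!: antisym INF_greatest INF_lower2)
qed

theorem mainTheorem4:
  fixes alpha :: "real ^ 'n" and D :: "(real ^ 'n) set"
  assumes "\<forall>i. 0 \<le> alpha $ i"
    and "D \<noteq> {}" and "convex D" and "compact D"
    and "\<forall>y\<in>D. \<forall>i. 0 \<le> y $ i"
  shows "((INF x\<in>{x. \<forall>i. 0 \<le> x $ i \<and> x $ i \<le> 1}. SUP y\<in>D. eratio (y \<bullet> x) (alpha \<bullet> x))
           = (SUP y\<in>D. Min ((\<lambda>i. eratio (y $ i) (alpha $ i)) ` UNIV))
         \<and> (INF x\<in>{x. \<forall>i. 0 \<le> x $ i}. SUP y\<in>D. eratio (y \<bullet> x) (alpha \<bullet> x))
           = (SUP y\<in>D. Min ((\<lambda>i. eratio (y $ i) (alpha $ i)) ` UNIV)))"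
proof -
  define c where "c = (SUP y\<in>D. min_ratio alpha y)"
  define F where "F x = (SUP y\<in>D. eratio (y \<bullet> x) (alpha \<bullet> x))" for x
  have "(INF x\<in>{x. \<forall>i. 0 \<le> x $ i \<and> x $ i \<le> 1}. F x) = c \<and> (INF x\<in>{x. \<forall>i. 0 \<le> x $ i}. F x) = c"
  proof (rule INF_eq_if_lower_bound_and_witness)
    show "c \<le> F x" if "x \<in> {x. \<forall>i. 0 \<le> x $ i}" for x
      using min_ratio_le_eratio_inner assms(1,5) that
      unfolding c_def F_def by (blast intro: SUP_mono)
    show "\<exists>x\<in>{x. \<forall>i. 0 \<le> x $ i \<and> x $ i \<le> 1}. F x \<le> c" if c_finite: "c \<noteq> top"
    proof -
      have "\<forall>y\<in>D. min_ratio alpha y \<le> c"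
        unfolding c_def by (blast intro: SUP_upper)
      then obtain x where "\<forall>i. 0 \<le> x $ i \<and> x $ i \<le> 1"
        and "\<forall>y\<in>D. eratio (y \<bullet> x) (alpha \<bullet> x) \<le> c"
        using unit_box_point_with_eratio_le[OF assms(1-3) _ c_finite[unfolded top_ereal_def]] by blast
      then show ?thesis
        unfolding F_def by (blast intro: SUP_least)
    qed
  qed auto
  then show ?thesis
    unfolding c_def F_def min_ratio_def .
qed

end
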